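(* For every integer $m \geq 3$, $\gamma_{b,2}(P_m \square C_4) = 4\left\lfloor \frac{m}{6} \right\rfloor + c$, where $c \in \{0,1\}$ if $m \equiv 0 \pmod 6$; $c = 2$ if $m \equiv 1$ or $2 \pmod 6$; $c = 3$ if $m \equiv 3 \pmod 6$; $c \in \{3,4\}$ if $m \equiv 4 \pmod 6$; and $c = 4$ if $m \equiv 5 \pmod 6$.
   Context: For a graph $G$, a $2$-limited broadcast is a function $f: V(G) \to \{0,1,2\}$. A vertex $u$ hears the broadcast from $v$ if $f(v) > 0$ and $d(u,v) \leq f(v)$, where $d$ is the distance in $G$. The broadcast $f$ is dominating if every vertex of $G$ hears the broadcast from some vertex. The cost of $f$ is $\sum_{v \in V(G)} f(v)$. The $2$-limited broadcast domination number $\gamma_{b,2}(G)$ is the minimum cost of a $2$-limited dominating broadcast on $G$. $C_n$ denotes the cycle on $n$ vertices, $P_m$ the path on $m$ vertices, and $\square$ the Cartesian product of graphs. *)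

theory Defs
  imports Main "HOL-Library.Extended_Nat"
begin

text \<open>A (simple, undirected) graph is given by its vertex set and its edge relation
  (a symmetric relation on the vertex set).\<close>
type_synonym 'a graph = "'a set \<times> ('a \<times> 'a) set"

definition verts :: "'a graph \<Rightarrow> 'a set" where "verts G = fst G"
definition edges :: "'a graph \<Rightarrow> ('a \<times> 'a) set" where "edges G = snd G"

text \<open>Graph distance: length of a shortest walk (infinite if none exists).\<close>
definition gdist :: "'a graph \<Rightarrow> 'a \<Rightarrow> 'a \<Rightarrow> enat" where
  "gdist G u v = (INF n \<in> {n. (u, v) \<in> (edges G) ^^ n}. enat n)"

definition path_graph :: "nat \<Rightarrow> nat graph" where
  "path_graph m = ({0..<m}, {(i, j). i < m \<and> j < m \<and> (j = i + 1 \<or> i = j + 1)})"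

definition cycle_graph :: "nat \<Rightarrow> nat graph" where
  "cycle_graph n = ({0..<n}, {(i, j). i < n \<and> j < n \<and> i \<noteq> j \<and>
       (j = (i + 1) mod n \<or> i = (j + 1) mod n)})"

definition cart_prod :: "'a graph \<Rightarrow> 'b graph \<Rightarrow> ('a \<times> 'b) graph" (infixr "\<box>" 80) where
  "cart_prod G H = (verts G \<times> verts H,
     {((a, b), (a', b')). a \<in> verts G \<and> a' \<in> verts G \<and> b \<in> verts H \<and> b' \<in> verts H \<and>
        ((a = a' \<and> (b, b') \<in> edges H) \<or> (b = b' \<and> (a, a') \<in> edges G))})"

definition limited_broadcast :: "nat \<Rightarrow> 'a graph \<Rightarrow> ('a \<Rightarrow> nat) \<Rightarrow> bool" where
  "limited_broadcast k G f \<longleftrightarrow> (\<forall>v. f v \<le> k) \<and> (\<forall>v. v \<notin> verts G \<longrightarrow> f v = 0)"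

definition hears :: "'a graph \<Rightarrow> ('a \<Rightarrow> nat) \<Rightarrow> 'a \<Rightarrow> 'a \<Rightarrow> bool" where
  "hears G f u v \<longleftrightarrow> f v > 0 \<and> gdist G u v \<le> enat (f v)"

definition dominating_broadcast :: "'a graph \<Rightarrow> ('a \<Rightarrow> nat) \<Rightarrow> bool" where
  "dominating_broadcast G f \<longleftrightarrow> (\<forall>u \<in> verts G. \<exists>v \<in> verts G. hears G f u v)"

definition bcost :: "'a graph \<Rightarrow> ('a \<Rightarrow> nat) \<Rightarrow> nat" where
  "bcost G f = (\<Sum>v \<in> verts G. f v)"

definition gamma_b :: "nat \<Rightarrow> 'a graph \<Rightarrow> nat" where
  "gamma_b k G = Min {bcost G f | f. limited_broadcast k G f \<and> dominating_broadcast G f}"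

end

theory Submission
  imports Defs
begin

(* Write the vertices of P_m \<box> C_4 as pairs (i, q) with column i < m and row q < 4; the graph
   distance is |i - j| plus the cyclic distance of the rows.

   Upper bound: broadcast with strength 2 from (3t + 2, 0) for even t and (3t + 2, 2) for odd t,
   one such vertex for each complete block of three columns, and with strength 1 from (0, 2)
   and, unless 3 divides m, from one vertex of the last column. This costs
   2 * (m div 3) + 1 + [3 does not divide m].

   Lower bound by weighting: every vertex of column i gets weight 8 if i is an end column,
   4 if i is next to an end column, and 5 otherwise (3 for the middle column when m = 3).
   The total weight is 4 * (5m + 4), and every ball of radius k \<le> 2 has weight at most 30k.
   Since the balls of a dominating broadcast cover all vertices, its cost c satisfies
   4 * (5m + 4) \<le> 30c. In every residue class of m mod 6 the two bounds give the value. *)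

section \<open>Graph distance and broadcast costs\<close>

lemma gdist_eq_metric:
  fixes G :: "'a graph" and d :: "'a \<Rightarrow> 'a \<Rightarrow> nat"
  assumes edge: "\<And>u v. (u, v) \<in> edges G \<Longrightarrow> v \<in> verts G \<and> d u v \<le> 1"
    and zero: "\<And>u. d u u = 0"
    and eq_if_zero: "\<And>u v. u \<in> verts G \<Longrightarrow> v \<in> verts G \<Longrightarrow> d u v = 0 \<Longrightarrow> u = v"
    and triangle: "\<And>u v w. u \<in> verts G \<Longrightarrow> v \<in> verts G \<Longrightarrow> w \<in> verts G \<Longrightarrow>
                     d u v \<le> d u w + d w v"
    and step: "\<And>u v. u \<in> verts G \<Longrightarrow> v \<in> verts G \<Longrightarrow> d u v \<noteq> 0 \<Longrightarrow>
                 \<exists>w. (u, w) \<in> edges G \<and> d w v = d u v - 1"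
    and u: "u \<in> verts G" and v: "v \<in> verts G"
  shows "gdist G u v = enat (d u v)"
proof -
  have dist_le_walk_length: "d u w \<le> n \<and> w \<in> verts G" if "(u, w) \<in> edges G ^^ n" for w n
    using that
  proof (induction n arbitrary: w)
    case 0
    then show ?case using u zero by simp
  next
    case (Suc n)
    then obtain x where ux: "(u, x) \<in> edges G ^^ n" and xw: "(x, w) \<in> edges G" by auto
    have "d u x \<le> n" "x \<in> verts G" using Suc.IH[OF ux] by auto
    moreover have "d x w \<le> 1" "w \<in> verts G" using edge[OF xw] by auto
    ultimately show ?case using triangle[OF u \<open>w \<in> verts G\<close> \<open>x \<in> verts G\<close>] by simp
  qed
  have walk_of_dist_length: "(x, v) \<in> edges G ^^ d x v" if "x \<in> verts G" for x
    using that
  proof (induction "d x v" arbitrary: x)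
    case 0
    then show ?case using eq_if_zero[OF _ v] by simp
  next
    case (Suc n)
    then obtain y where xy: "(x, y) \<in> edges G" and "d y v = n"
      using step[OF _ v] by (metis diff_Suc_1 nat.distinct(1))
    then have "(y, v) \<in> edges G ^^ n" using Suc edge by blast
    then show ?case
      using xy Suc.hyps(2)[symmetric] by (simp del: relpow.simps add: relpow_Suc_I2)
  qed
  show ?thesis
    unfolding gdist_def
  proof (rule INF_eqI)
    show "enat (d u v) \<le> enat n" if "n \<in> {n. (u, v) \<in> edges G ^^ n}" for n
      using dist_le_walk_length that by simp
    show "y \<le> enat (d u v)" if "\<And>n. n \<in> {n. (u, v) \<in> edges G ^^ n} \<Longrightarrow> y \<le> enat n" for y
      using that walk_of_dist_length[OF u] by simp
  qed
qed

lemma bcost_le_card: "limited_broadcast k G f \<Longrightarrow> bcost G f \<le> k * card (verts G)"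
proof -
  assume "limited_broadcast k G f"
  then have "bcost G f \<le> (\<Sum>v\<in>verts G. k)"
    unfolding bcost_def limited_broadcast_def by (intro sum_mono) auto
  then show ?thesis by (simp add: mult.commute)
qed

lemma gamma_b_attained:
  assumes "finite (verts G)" "limited_broadcast k G f" "dominating_broadcast G f"
  shows "\<exists>h. limited_broadcast k G h \<and> dominating_broadcast G h \<and> gamma_b k G = bcost G h"
    and "gamma_b k G \<le> bcost G f"
proof -
  define S where "S = {bcost G f | f. limited_broadcast k G f \<and> dominating_broadcast G f}"
  have "S \<subseteq> {..k * card (verts G)}"
    unfolding S_def using bcost_le_card by fastforce
  then have "finite S" by (rule finite_subset) simp
  moreover have "bcost G f \<in> S"
    unfolding S_def using assms by blast
  ultimately have "Min S \<in> S" "Min S \<le> bcost G f"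
    by (auto intro: Min_in Min_le)
  moreover have "gamma_b k G = Min S"
    unfolding S_def gamma_b_def ..
  ultimately show "\<exists>h. limited_broadcast k G h \<and> dominating_broadcast G h \<and> gamma_b k G = bcost G h"
    and "gamma_b k G \<le> bcost G f"
    unfolding S_def by auto
qed

lemma weight_le_bcost:
  fixes wt :: "'a \<Rightarrow> nat"
  assumes fin: "finite (verts G)" and dom: "dominating_broadcast G f"
    and ball: "\<And>v. v \<in> verts G \<Longrightarrow> 0 < f v \<Longrightarrow>
                 (\<Sum>u | u \<in> verts G \<and> hears G f u v. wt u) \<le> c * f v"
  shows "(\<Sum>u\<in>verts G. wt u) \<le> c * bcost G f"
proof -
  let ?H = "\<lambda>u v. if hears G f u v then wt u else 0"
  have "(\<Sum>u\<in>verts G. wt u) \<le> (\<Sum>u\<in>verts G. \<Sum>v\<in>verts G. ?H u v)"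
  proof (rule sum_mono)
    fix u assume "u \<in> verts G"
    then obtain v where "v \<in> verts G" "hears G f u v"
      using dom unfolding dominating_broadcast_def by blast
    then show "wt u \<le> (\<Sum>v\<in>verts G. ?H u v)"
      using member_le_sum[of v "verts G" "\<lambda>v. ?H u v"] fin by simp
  qed
  also have "\<dots> = (\<Sum>v\<in>verts G. \<Sum>u\<in>verts G. ?H u v)"
    by (rule sum.swap)
  also have "\<dots> \<le> (\<Sum>v\<in>verts G. c * f v)"
  proof (rule sum_mono)
    fix v assume v: "v \<in> verts G"
    have "(\<Sum>u\<in>verts G. ?H u v) = (\<Sum>u | u \<in> verts G \<and> hears G f u v. wt u)"
      using fin by (simp add: sum.inter_filter)
    also have "\<dots> \<le> c * f v"
      using ball[OF v] by (cases "f v = 0") (auto simp: hears_def)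
    finally show "(\<Sum>u\<in>verts G. ?H u v) \<le> c * f v" .
  qed
  also have "\<dots> = c * bcost G f"
    by (simp add: bcost_def sum_distrib_left)
  finally show ?thesis .
qed

section \<open>The cycle C_4\<close>

definition c4_dist :: "nat \<Rightarrow> nat \<Rightarrow> nat" where
  "c4_dist q p = min ((q + 4 - p) mod 4) ((p + 4 - q) mod 4)"

lemma less_4_cases: "(q::nat) < 4 \<Longrightarrow> q = 0 \<or> q = 1 \<or> q = 2 \<or> q = 3"
  by auto

lemma ex_less_4: "(\<exists>q::nat<4. P q) \<longleftrightarrow> P 0 \<or> P 1 \<or> P 2 \<or> P 3"
  by (auto dest!: less_4_cases
      intro: exI[of _ "0::nat"] exI[of _ "1::nat"] exI[of _ "2::nat"] exI[of _ "3::nat"])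

lemma sum_less_4: "(\<Sum>q<4. g q) = g (0::nat) + g 1 + g 2 + (g 3 :: 'a :: comm_monoid_add)"
  by (simp add: numeral_eq_Suc add.assoc)

lemma c4_dist_self: "c4_dist q q = 0"
  by (simp add: c4_dist_def)

lemma c4_dist_eq_0_iff: "q < 4 \<Longrightarrow> p < 4 \<Longrightarrow> c4_dist q p = 0 \<longleftrightarrow> q = p"
  by (elim less_4_cases[elim_format] disjE) (simp_all add: c4_dist_def)

lemma c4_dist_eq_1_iff:
  "q < 4 \<Longrightarrow> p < 4 \<Longrightarrow> c4_dist q p = 1 \<longleftrightarrow> q \<noteq> p \<and> (p = (q + 1) mod 4 \<or> q = (p + 1) mod 4)"
  by (elim less_4_cases[elim_format] disjE) (simp_all add: c4_dist_def)

lemma c4_dist_le_2: "q < 4 \<Longrightarrow> p < 4 \<Longrightarrow> c4_dist q p \<le> 2"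
  by (elim less_4_cases[elim_format] disjE) (simp_all add: c4_dist_def)

lemma c4_dist_triangle:
  "q < 4 \<Longrightarrow> p < 4 \<Longrightarrow> r < 4 \<Longrightarrow> c4_dist q p \<le> c4_dist q r + c4_dist r p"
  by (elim less_4_cases[elim_format] disjE) (simp_all add: c4_dist_def)

lemma c4_dist_step: "q < 4 \<Longrightarrow> p < 4 \<Longrightarrow> c4_dist q p \<noteq> 0 \<Longrightarrow>
    \<exists>r<4. c4_dist q r = 1 \<and> c4_dist r p = c4_dist q p - 1"
  by (elim less_4_cases[elim_format] disjE) (simp_all add: c4_dist_def ex_less_4)

definition column_ball_size :: "nat \<Rightarrow> nat \<Rightarrow> nat" where
  "column_ball_size k d = (if d \<le> k then min 4 (2 * (k - d) + 1) else 0)"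

lemma card_c4_ball:
  "p < 4 \<Longrightarrow> card {q. q < 4 \<and> d + c4_dist q p \<le> k} = column_ball_size k d"
proof -
  have "card {q. q < 4 \<and> d + c4_dist q p \<le> k} = (\<Sum>q<4. of_bool (d + c4_dist q p \<le> k))"
    by (simp add: Int_def)
  also assume "p < 4"
  then have "(\<Sum>q<4. of_bool (d + c4_dist q p \<le> k)) = column_ball_size k d"
    unfolding sum_less_4
    by (elim less_4_cases[elim_format] disjE) (auto simp: c4_dist_def column_ball_size_def)
  finally show ?thesis .
qed

section \<open>Distances in P_m \<box> C_4\<close>

abbreviation cylinder :: "nat \<Rightarrow> (nat \<times> nat) graph" where
  "cylinder m \<equiv> path_graph m \<box> cycle_graph 4"

(* (i - j) + (j - i) is |i - j| on nat, by truncated subtraction. *)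
definition grid_dist :: "nat \<times> nat \<Rightarrow> nat \<times> nat \<Rightarrow> nat" where
  "grid_dist u v = (fst u - fst v) + (fst v - fst u) + c4_dist (snd u) (snd v)"

lemma verts_cylinder: "verts (cylinder m) = {..<m} \<times> {..<4}"
  by (auto simp: cart_prod_def verts_def path_graph_def cycle_graph_def)

lemma edges_cylinder_iff:
  "(u, v) \<in> edges (cylinder m) \<longleftrightarrow>
     u \<in> verts (cylinder m) \<and> v \<in> verts (cylinder m) \<and> grid_dist u v = 1"
proof -
  obtain i q j p where u: "u = (i, q)" and v: "v = (j, p)" by fastforce
  show ?thesis
  proof (cases "q < 4 \<and> p < 4")
    case True
    then show ?thesis
      using c4_dist_eq_0_iff[of q p] c4_dist_eq_1_iff[of q p]
      by (auto simp: u v grid_dist_def cart_prod_def edges_def verts_def path_graph_def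
          cycle_graph_def)
  qed (auto simp: u v cart_prod_def edges_def verts_def path_graph_def cycle_graph_def)
qed

lemma grid_dist_triangle:
  "snd u < 4 \<Longrightarrow> snd v < 4 \<Longrightarrow> snd w < 4 \<Longrightarrow> grid_dist u v \<le> grid_dist u w + grid_dist w v"
  using c4_dist_triangle[of "snd u" "snd v" "snd w"] by (simp add: grid_dist_def)

lemma grid_dist_step:
  assumes u: "u \<in> verts (cylinder m)" and v: "v \<in> verts (cylinder m)" and "grid_dist u v \<noteq> 0"
  shows "\<exists>w. (u, w) \<in> edges (cylinder m) \<and> grid_dist w v = grid_dist u v - 1"
proof -
  obtain i q j p where uv: "u = (i, q)" "v = (j, p)" and "i < m" "q < 4" "j < m" "p < 4"
    using u v by (auto simp: verts_cylinder)
  consider "i < j" | "j < i" | "i = j" "c4_dist q p \<noteq> 0"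
    using \<open>grid_dist u v \<noteq> 0\<close> by (fastforce simp: uv grid_dist_def)
  then obtain w where
    "w \<in> verts (cylinder m)" "grid_dist u w = 1" "grid_dist w v = grid_dist u v - 1"
  proof cases
    case 1
    then show ?thesis
      using \<open>j < m\<close> \<open>q < 4\<close>
      by (intro that[of "(i + 1, q)"]) (auto simp: uv grid_dist_def verts_cylinder c4_dist_self)
  next
    case 2
    then show ?thesis
      using \<open>i < m\<close> \<open>q < 4\<close>
      by (intro that[of "(i - 1, q)"]) (auto simp: uv grid_dist_def verts_cylinder c4_dist_self)
  next
    case 3
    then obtain r where "r < 4" "c4_dist q r = 1" "c4_dist r p = c4_dist q p - 1"
      using c4_dist_step \<open>q < 4\<close> \<open>p < 4\<close> by blast
    then show ?thesis
      using 3 \<open>i < m\<close> by (intro that[of "(i, r)"]) (auto simp: uv grid_dist_def verts_cylinder)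
  qed
  then show ?thesis using u edges_cylinder_iff by blast
qed

lemma gdist_cylinder:
  assumes "u \<in> verts (cylinder m)" "v \<in> verts (cylinder m)"
  shows "gdist (cylinder m) u v = enat (grid_dist u v)"
proof (rule gdist_eq_metric[OF _ _ _ _ grid_dist_step assms])
  show "v \<in> verts (cylinder m) \<and> grid_dist u v \<le> 1" if "(u, v) \<in> edges (cylinder m)" for u v
    using that by (simp add: edges_cylinder_iff)
  show "grid_dist u u = 0" for u
    by (simp add: grid_dist_def c4_dist_self)
  show "u = v" if "u \<in> verts (cylinder m)" "v \<in> verts (cylinder m)" "grid_dist u v = 0" for u v
    using that c4_dist_eq_0_iff[of "snd u" "snd v"]
    by (auto simp: verts_cylinder grid_dist_def prod_eq_iff)
  show "grid_dist u v \<le> grid_dist u w + grid_dist w v"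
    if "u \<in> verts (cylinder m)" "v \<in> verts (cylinder m)" "w \<in> verts (cylinder m)" for u v w
    using that by (intro grid_dist_triangle) (auto simp: verts_cylinder)
qed

lemma hears_cylinder_iff:
  "u \<in> verts (cylinder m) \<Longrightarrow> v \<in> verts (cylinder m) \<Longrightarrow>
     hears (cylinder m) f u v \<longleftrightarrow> 0 < f v \<and> grid_dist u v \<le> f v"
  by (simp add: hears_def gdist_cylinder)

lemma ball_weight_cylinder:
  fixes wt :: "nat \<Rightarrow> nat"
  assumes "p < 4"
  shows "(\<Sum>u | u \<in> verts (cylinder m) \<and> grid_dist u (j, p) \<le> k. wt (fst u)) =
         (\<Sum>i<m. wt i * column_ball_size k ((i - j) + (j - i)))"
proof -
  have "(\<Sum>u | u \<in> verts (cylinder m) \<and> grid_dist u (j, p) \<le> k. wt (fst u)) =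
        (\<Sum>i<m. \<Sum>q<4. if (i - j) + (j - i) + c4_dist q p \<le> k then wt i else 0)"
    by (simp add: sum.inter_filter verts_cylinder sum.cartesian_product grid_dist_def split_def)
  also have "\<dots> = (\<Sum>i<m. wt i * card {q. q < 4 \<and> (i - j) + (j - i) + c4_dist q p \<le> k})"
    by (simp add: sum.If_cases Int_def mult.commute)
  also have "\<dots> = (\<Sum>i<m. wt i * column_ball_size k ((i - j) + (j - i)))"
    using card_c4_ball[OF assms] by simp
  finally show ?thesis .
qed

section \<open>Lower bound by weighting\<close>

definition col_weight :: "nat \<Rightarrow> nat \<Rightarrow> nat" where
  "col_weight m i =
     (if i = 0 \<or> i + 1 = m then 8 else if i = 1 \<and> i + 2 = m then 3
      else if i = 1 \<or> i + 2 = m then 4 else 5)"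

lemma sum_col_weight:
  assumes "3 \<le> m" shows "(\<Sum>i<m. col_weight m i) = 5 * m + 4"
proof -
  let ?bump = "\<lambda>c i. if i = c then 1 else 0 :: int"
  have "int (col_weight m i) = 5 + 3 * ?bump 0 i + 3 * ?bump (m - 1) i - ?bump 1 i - ?bump (m - 2) i"
    if "i < m" for i
    using that assms by (auto simp: col_weight_def)
  then have "int (\<Sum>i<m. col_weight m i) =
      (\<Sum>i<m. 5 + 3 * ?bump 0 i + 3 * ?bump (m - 1) i - ?bump 1 i - ?bump (m - 2) i)"
    by (simp add: of_nat_sum)
  also have "\<dots> = 5 * int m + 4"
    using assms by (simp add: sum.distrib sum_subtractf sum_distrib_left[symmetric])
  finally show ?thesis by linarith
qed

lemma sum_window:
  fixes g :: "nat \<Rightarrow> 'a :: comm_monoid_add"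
  assumes "\<And>i. i < m \<Longrightarrow> r < (i - j) + (j - i) \<Longrightarrow> g i = 0"
  shows "(\<Sum>i<m. g i) =
         (\<Sum>d<2 * r + 1. if r \<le> j + d \<and> j + d - r < m then g (j + d - r) else 0)"
proof -
  let ?T = "{d. d < 2 * r + 1 \<and> r \<le> j + d \<and> j + d - r < m}"
  have "(\<Sum>i<m. g i) = (\<Sum>i | i < m \<and> (i - j) + (j - i) \<le> r. g i)"
    using assms by (intro sum.mono_neutral_right) (auto, meson not_le)
  also have "{i. i < m \<and> (i - j) + (j - i) \<le> r} = (\<lambda>d. j + d - r) ` ?T"
  proof (rule set_eqI, rule iffI)
    fix i assume "i \<in> {i. i < m \<and> (i - j) + (j - i) \<le> r}"
    then show "i \<in> (\<lambda>d. j + d - r) ` ?T"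
      by (intro image_eqI[of _ _ "i + r - j"]) auto
  qed auto
  also have "(\<Sum>i\<in>(\<lambda>d. j + d - r) ` ?T. g i) = (\<Sum>d\<in>?T. g (j + d - r))"
    by (rule sum.reindex_cong[where l = "\<lambda>d. j + d - r"]) (auto simp: inj_on_def)
  also have "\<dots> = (\<Sum>d<2 * r + 1. if r \<le> j + d \<and> j + d - r < m then g (j + d - r) else 0)"
    by (simp add: sum.inter_filter[symmetric] conj_commute lessThan_def)
  finally show ?thesis .
qed

lemma col_weight_ball_bound:
  assumes "3 \<le> m" "j < m" "k = 1 \<or> k = 2"
  shows "(\<Sum>i<m. col_weight m i * column_ball_size k ((i - j) + (j - i))) \<le> 30 * k"
proof -
  let ?w = "\<lambda>i. if i < m then col_weight m i else 0"
  have "(\<Sum>i<m. col_weight m i * column_ball_size k ((i - j) + (j - i))) =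
     (\<Sum>d<2 * 2 + 1. if 2 \<le> j + d \<and> j + d - 2 < m
        then col_weight m (j + d - 2) * column_ball_size k ((j + d - 2 - j) + (j - (j + d - 2)))
        else 0)"
    by (rule sum_window) (use assms in \<open>auto simp: column_ball_size_def\<close>)
  also have "\<dots> =
      (if 2 \<le> j then ?w (j - 2) * column_ball_size k 2 else 0) +
      (if 1 \<le> j then ?w (j - 1) * column_ball_size k 1 else 0) +
      ?w j * column_ball_size k 0 + ?w (j + 1) * column_ball_size k 1 +
      ?w (j + 2) * column_ball_size k 2"
    using assms(2) by (auto simp: lessThan_nat_numeral numeral_2_eq_2 cong: if_cong)
  also have "\<dots> \<le> 30 * k"
  proof -
    consider "j = 0" | "j = 1" | "j = 2" | "j + 1 = m" | "j + 2 = m" | "j + 3 = m"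
      | "3 \<le> j" "j + 4 \<le> m"
      using assms by linarith
    then show ?thesis
      by cases (use assms in \<open>auto simp: col_weight_def column_ball_size_def\<close>)
  qed
  finally show ?thesis .
qed

lemma cylinder_bcost_lower_bound:
  assumes m: "3 \<le> m" and lim: "limited_broadcast 2 (cylinder m) f"
    and dom: "dominating_broadcast (cylinder m) f"
  shows "4 * (5 * m + 4) \<le> 30 * bcost (cylinder m) f"
proof -
  have "4 * (5 * m + 4) = 4 * (\<Sum>i<m. col_weight m i)"
    using sum_col_weight[OF m] by simp
  also have "\<dots> = (\<Sum>u\<in>verts (cylinder m). col_weight m (fst u))"
    by (simp add: verts_cylinder sum.cartesian_product' sum_distrib_left mult.commute)
  also have "\<dots> \<le> 30 * bcost (cylinder m) f"
  proof (rule weight_le_bcost[OF _ dom])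
    fix v assume v: "v \<in> verts (cylinder m)" and "0 < f v"
    moreover have "f v \<le> 2"
      using lim unfolding limited_broadcast_def by blast
    ultimately have k: "f v = 1 \<or> f v = 2" by arith
    obtain j p where jp: "v = (j, p)" "j < m" "p < 4"
      using v by (auto simp: verts_cylinder)
    have "(\<Sum>u | u \<in> verts (cylinder m) \<and> hears (cylinder m) f u v. col_weight m (fst u)) =
          (\<Sum>u | u \<in> verts (cylinder m) \<and> grid_dist u v \<le> f v. col_weight m (fst u))"
      using v \<open>0 < f v\<close> by (intro sum.cong) (auto simp: hears_cylinder_iff)
    also have "\<dots> = (\<Sum>i<m. col_weight m i * column_ball_size (f v) ((i - j) + (j - i)))"
      using jp by (simp add: ball_weight_cylinder)
    also have "\<dots> \<le> 30 * f v"
      using col_weight_ball_bound[OF m \<open>j < m\<close> k] .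
    finally show
      "(\<Sum>u | u \<in> verts (cylinder m) \<and> hears (cylinder m) f u v. col_weight m (fst u)) \<le> 30 * f v" .
  qed (simp add: verts_cylinder)
  finally show ?thesis .
qed

section \<open>Upper bound by an explicit broadcast\<close>

definition stripe_row :: "nat \<Rightarrow> nat" where
  "stripe_row t = 2 * (t mod 2)"

definition stripe_centres :: "nat \<Rightarrow> (nat \<times> nat) set" where
  "stripe_centres m = (\<lambda>t. (3 * t + 2, stripe_row t)) ` {..<m div 3}"

definition stripe_broadcast :: "nat \<Rightarrow> nat \<times> nat \<Rightarrow> nat" where
  "stripe_broadcast m v =
     2 * of_bool (v \<in> stripe_centres m) + of_bool (v = (0, 2)) +
     of_bool (m mod 3 \<noteq> 0 \<and> v = (m - 1, stripe_row (m div 3)))"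

lemma stripe_row_less_4: "stripe_row t < 4"
  by (simp add: stripe_row_def)

lemma stripe_row_Suc_Suc: "stripe_row (Suc (Suc t)) = stripe_row t"
  by (simp add: stripe_row_def)

lemma c4_dist_stripe_row: "q < 4 \<Longrightarrow> c4_dist q (stripe_row t) \<le> 1 \<or> q = stripe_row (Suc t)"
  using mod_less_divisor[of 2 t]
  by (elim less_4_cases[elim_format] disjE; cases "t mod 2")
    (auto simp: c4_dist_def stripe_row_def mod_Suc)

lemma add_2_less_iff_less_div_3: "3 * t + 2 < m \<longleftrightarrow> t < (m::nat) div 3"
  by presburger

lemma mem_stripe_centres_iff:
  "(i, q) \<in> stripe_centres m \<longleftrightarrow> i mod 3 = 2 \<and> i < m \<and> q = stripe_row (i div 3)"
proof
  assume "(i, q) \<in> stripe_centres m"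
  then obtain t where "t < m div 3" "i = 3 * t + 2" "q = stripe_row t"
    by (auto simp: stripe_centres_def)
  moreover from \<open>i = 3 * t + 2\<close> have "i mod 3 = 2" "i div 3 = t"
    by presburger+
  ultimately show "i mod 3 = 2 \<and> i < m \<and> q = stripe_row (i div 3)"
    using add_2_less_iff_less_div_3 by simp
next
  assume "i mod 3 = 2 \<and> i < m \<and> q = stripe_row (i div 3)"
  moreover have "i = 3 * (i div 3) + i mod 3" by simp
  ultimately show "(i, q) \<in> stripe_centres m"
    unfolding stripe_centres_def using add_2_less_iff_less_div_3[of "i div 3" m]
    by (intro image_eqI[of _ _ "i div 3"]) auto
qed

lemma stripe_centres_subset: "stripe_centres m \<subseteq> verts (cylinder m)"
  by (auto simp: mem_stripe_centres_iff verts_cylinder stripe_row_less_4)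

lemma card_stripe_centres: "card (stripe_centres m) = m div 3"
  unfolding stripe_centres_def by (subst card_image) (auto simp: inj_on_def)

lemma stripe_broadcast_eq:
  assumes "3 \<le> m"
  shows "stripe_broadcast m v =
     (if v \<in> stripe_centres m then 2 else if v = (0, 2) then 1
      else if m mod 3 \<noteq> 0 \<and> v = (m - 1, stripe_row (m div 3)) then 1 else 0)"
proof -
  have "(0, 2) \<notin> stripe_centres m" "(0, 2) \<noteq> (m - 1, stripe_row (m div 3))"
    using assms by (auto simp: mem_stripe_centres_iff)
  moreover have "(m - 1, stripe_row (m div 3)) \<notin> stripe_centres m" if "m mod 3 \<noteq> 0"
  proof -
    have "(m - 1) mod 3 \<noteq> 2" using that by (cases m) (auto simp: mod_Suc)
    then show ?thesis by (simp add: mem_stripe_centres_iff)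
  qed
  ultimately show ?thesis
    by (auto simp: stripe_broadcast_def)
qed

lemma stripe_broadcast_limited:
  "3 \<le> m \<Longrightarrow> limited_broadcast 2 (cylinder m) (stripe_broadcast m)"
  using stripe_centres_subset
  by (auto simp: limited_broadcast_def stripe_broadcast_eq verts_cylinder stripe_row_less_4)

lemma bcost_stripe_broadcast:
  assumes "3 \<le> m"
  shows "bcost (cylinder m) (stripe_broadcast m) = 2 * (m div 3) + 1 + of_bool (m mod 3 \<noteq> 0)"
proof -
  let ?V = "verts (cylinder m)" and ?r = "(m - 1, stripe_row (m div 3))"
  have fin: "finite ?V" by (simp add: verts_cylinder)
  have "bcost (cylinder m) (stripe_broadcast m) =
      2 * card (?V \<inter> stripe_centres m) + card (?V \<inter> {(0, 2)}) +
      card (?V \<inter> {v. m mod 3 \<noteq> 0 \<and> v = ?r})"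
    unfolding bcost_def stripe_broadcast_def
    by (simp add: fin sum.distrib sum_distrib_left[symmetric] Int_def[symmetric])
  also have "?V \<inter> stripe_centres m = stripe_centres m"
    using stripe_centres_subset by blast
  also have "?V \<inter> {(0, 2)} = {(0, 2)}"
    using assms by (auto simp: verts_cylinder)
  also have "?V \<inter> {v. m mod 3 \<noteq> 0 \<and> v = ?r} = (if m mod 3 \<noteq> 0 then {?r} else {})"
    using assms stripe_row_less_4 by (auto simp: verts_cylinder)
  finally show ?thesis
    by (simp add: card_stripe_centres)
qed

abbreviation stripe_heard :: "nat \<Rightarrow> nat \<times> nat \<Rightarrow> bool" where
  "stripe_heard m u \<equiv> \<exists>v\<in>verts (cylinder m). hears (cylinder m) (stripe_broadcast m) u v"

lemma stripe_heard_centre: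
  assumes "3 \<le> m" "u \<in> verts (cylinder m)" "t < m div 3"
    and "grid_dist u (3 * t + 2, stripe_row t) \<le> 2"
  shows "stripe_heard m u"
proof -
  let ?c = "(3 * t + 2, stripe_row t)"
  have "?c \<in> stripe_centres m"
    using assms(3) by (auto simp: stripe_centres_def)
  then have "?c \<in> verts (cylinder m)" "stripe_broadcast m ?c = 2"
    using stripe_centres_subset by (auto simp: stripe_broadcast_eq[OF assms(1)])
  then show ?thesis
    using assms(2,4) by (intro bexI[of _ ?c]) (simp_all add: hears_cylinder_iff)
qed

lemma stripe_heard_left:
  assumes "3 \<le> m" "u \<in> verts (cylinder m)" "grid_dist u (0, 2) \<le> 1"
  shows "stripe_heard m u"
  using assms
  by (intro bexI[of _ "(0, 2)"]) (auto simp: hears_cylinder_iff stripe_broadcast_eq verts_cylinder)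

lemma stripe_heard_right:
  assumes "3 \<le> m" "u \<in> verts (cylinder m)" "m mod 3 \<noteq> 0"
    and "grid_dist u (m - 1, stripe_row (m div 3)) \<le> 1"
  shows "stripe_heard m u"
  using assms stripe_row_less_4 stripe_broadcast_eq[OF assms(1), of "(m - 1, stripe_row (m div 3))"]
  by (intro bexI[of _ "(m - 1, stripe_row (m div 3))"]) (auto simp: hears_cylinder_iff verts_cylinder)

lemma stripe_heard_mod_3_eq_2:
  assumes m: "3 \<le> m" and "3 * t + 2 < m" "q < 4"
  shows "stripe_heard m (3 * t + 2, q)"
  using assms c4_dist_le_2[OF \<open>q < 4\<close> stripe_row_less_4] add_2_less_iff_less_div_3
  by (intro stripe_heard_centre[OF m, of _ t]) (auto simp: grid_dist_def verts_cylinder)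

lemma stripe_heard_mod_3_eq_1:
  assumes m: "3 \<le> m" and "3 * t + 1 < m" "q < 4"
  shows "stripe_heard m (3 * t + 1, q)"
proof -
  have u: "(3 * t + 1, q) \<in> verts (cylinder m)"
    using assms by (simp add: verts_cylinder)
  consider "c4_dist q (stripe_row t) \<le> 1" | "q = stripe_row (Suc t)"
    using c4_dist_stripe_row \<open>q < 4\<close> by blast
  then show ?thesis
  proof cases
    case near: 1
    show ?thesis
    proof (cases "3 * t + 2 < m")
      case True
      then show ?thesis
        using near add_2_less_iff_less_div_3
        by (intro stripe_heard_centre[OF m u, of t]) (auto simp: grid_dist_def)
    next
      case False
      then have "m = 3 * t + 2" using assms by simp
      then have "m mod 3 \<noteq> 0" "m div 3 = t" by presburger+
      then show ?thesis
        using near \<open>m = 3 * t + 2\<close> by (intro stripe_heard_right[OF m u]) (auto simp: grid_dist_def)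
    qed
  next
    case opposite: 2
    show ?thesis
    proof (cases t)
      case 0
      then show ?thesis
        using opposite
        by (intro stripe_heard_left[OF m u]) (simp add: grid_dist_def stripe_row_def c4_dist_def)
    next
      case (Suc s)
      then show ?thesis
        using opposite assms add_2_less_iff_less_div_3[of s m] c4_dist_self[of q]
        by (intro stripe_heard_centre[OF m u, of s]) (auto simp: grid_dist_def stripe_row_Suc_Suc)
    qed
  qed
qed

lemma stripe_heard_mod_3_eq_0:
  assumes m: "3 \<le> m" and "3 * t < m" "q < 4"
  shows "stripe_heard m (3 * t, q)"
proof -
  have u: "(3 * t, q) \<in> verts (cylinder m)"
    using assms by (simp add: verts_cylinder)
  show ?thesis
  proof (cases t)
    case 0
    consider "c4_dist q 2 \<le> 1" | "q = 0"
      using c4_dist_stripe_row[OF \<open>q < 4\<close>, of 1] by (auto simp: stripe_row_def)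
    then show ?thesis
    proof cases
      case 1
      then show ?thesis
        using 0 by (intro stripe_heard_left[OF m u]) (simp add: grid_dist_def)
    next
      case 2
      then show ?thesis
        using 0 m
        by (intro stripe_heard_centre[OF m u, of 0]) (simp_all add: grid_dist_def stripe_row_def c4_dist_def)
    qed
  next
    case (Suc s)
    consider "c4_dist q (stripe_row s) \<le> 1" | "q = stripe_row t"
      using c4_dist_stripe_row[OF \<open>q < 4\<close>, of s] Suc by blast
    then show ?thesis
    proof cases
      case 1
      then show ?thesis
        using Suc assms add_2_less_iff_less_div_3[of s m]
        by (intro stripe_heard_centre[OF m u, of s]) (auto simp: grid_dist_def)
    next
      case 2
      show ?thesis
      proof (cases "3 * t + 2 < m")
        case True
        then show ?thesis
          using 2 add_2_less_iff_less_div_3[of t m] c4_dist_self[of q]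
          by (intro stripe_heard_centre[OF m u, of t]) (auto simp: grid_dist_def)
      next
        case False
        then have "m = 3 * t + 1 \<or> m = 3 * t + 2" using assms by linarith
        then have "m mod 3 \<noteq> 0" "m div 3 = t" by presburger+
        then show ?thesis
          using 2 \<open>m = 3 * t + 1 \<or> m = 3 * t + 2\<close> c4_dist_self[of q]
          by (intro stripe_heard_right[OF m u]) (auto simp: grid_dist_def)
      qed
    qed
  qed
qed

lemma stripe_broadcast_dominating:
  assumes m: "3 \<le> m"
  shows "dominating_broadcast (cylinder m) (stripe_broadcast m)"
  unfolding dominating_broadcast_def
proof
  fix u assume "u \<in> verts (cylinder m)"
  then obtain i q where iq: "u = (i, q)" "i < m" "q < 4"
    by (auto simp: verts_cylinder)
  have "i = 3 * (i div 3) + i mod 3" "i mod 3 < 3"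
    by simp_all
  then consider "i = 3 * (i div 3) + 2" | "i = 3 * (i div 3) + 1" | "i = 3 * (i div 3)"
    by linarith
  then show "stripe_heard m u"
    using iq stripe_heard_mod_3_eq_2[OF m] stripe_heard_mod_3_eq_1[OF m] stripe_heard_mod_3_eq_0[OF m]
    by cases metis+
qed

lemma mod_6_cases_of_bounds:
  fixes m g :: nat
  assumes lower: "4 * (5 * m + 4) \<le> 30 * g"
    and upper: "g \<le> 2 * (m div 3) + 1 + of_bool (m mod 3 \<noteq> 0)"
  shows "(m mod 6 = 0 \<longrightarrow> g = 4 * (m div 6) \<or> g = 4 * (m div 6) + 1) \<and>
     ((m mod 6 = 1 \<or> m mod 6 = 2) \<longrightarrow> g = 4 * (m div 6) + 2) \<and>
     (m mod 6 = 3 \<longrightarrow> g = 4 * (m div 6) + 3) \<and>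
     (m mod 6 = 4 \<longrightarrow> g = 4 * (m div 6) + 3 \<or> g = 4 * (m div 6) + 4) \<and>
     (m mod 6 = 5 \<longrightarrow> g = 4 * (m div 6) + 4)"
proof -
  define k r where "k = m div 6" and "r = m mod 6"
  have m: "m = 6 * k + r" and "r < 6"
    unfolding k_def r_def by simp_all
  have "m div 3 = 2 * k + r div 3" "m mod 3 = r mod 3"
    unfolding m by presburger+
  then have "4 * (5 * (6 * k + r) + 4) \<le> 30 * g"
    and "g \<le> 2 * (2 * k + r div 3) + 1 + of_bool (r mod 3 \<noteq> 0)"
    using lower upper m by simp_all
  moreover have "r = 0 \<or> r = 1 \<or> r = 2 \<or> r = 3 \<or> r = 4 \<or> r = 5"
    using \<open>r < 6\<close> by arith
  ultimately show ?thesis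
    unfolding k_def[symmetric] r_def[symmetric] by (elim disjE) simp_all
qed

theorem corollary4p4:
  fixes m :: nat
  assumes "m \<ge> 3"
  shows "let g = gamma_b 2 (path_graph m \<box> cycle_graph 4); q = 4 * (m div 6) in
     (m mod 6 = 0 \<longrightarrow> g = q \<or> g = q + 1) \<and>
     ((m mod 6 = 1 \<or> m mod 6 = 2) \<longrightarrow> g = q + 2) \<and>
     (m mod 6 = 3 \<longrightarrow> g = q + 3) \<and>
     (m mod 6 = 4 \<longrightarrow> g = q + 3 \<or> g = q + 4) \<and>
     (m mod 6 = 5 \<longrightarrow> g = q + 4)"
proof -
  have fin: "finite (verts (cylinder m))"
    by (simp add: verts_cylinder)
  note stripe = stripe_broadcast_limited[OF assms] stripe_broadcast_dominating[OF assms]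
  obtain f where "limited_broadcast 2 (cylinder m) f" "dominating_broadcast (cylinder m) f"
    and opt: "gamma_b 2 (cylinder m) = bcost (cylinder m) f"
    using gamma_b_attained(1)[OF fin stripe] by blast
  then have "4 * (5 * m + 4) \<le> 30 * gamma_b 2 (cylinder m)"
    using cylinder_bcost_lower_bound[OF assms] by simp
  moreover have "gamma_b 2 (cylinder m) \<le> 2 * (m div 3) + 1 + of_bool (m mod 3 \<noteq> 0)"
    using gamma_b_attained(2)[OF fin stripe] bcost_stripe_broadcast[OF assms] by simp
  ultimately show ?thesis
    unfolding Let_def by (rule mod_6_cases_of_bounds)
qed

end
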